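(* Let $q$ be a prime power and $s$ an odd positive integer. Let $L=\mathbb{F}_{q^s}$, $F=\mathbb{F}_{q^{4s}}$, $G=F^*/L^*$, let $\pi:F^*\to G$ be the natural epimorphism, and let $D=\pi(\{x\in F: \mathrm{Tr}_{F/L}(x)=0\}\setminus\{0\})$, the Singer difference set in $G$ with parameters $\left(\frac{q^{4s}-1}{q^s-1},\frac{q^{3s}-1}{q^s-1},\frac{q^{2s}-1}{q^s-1}\right)$ coming from the trace zero hyperplane. Let $R$ be the subgroup of $G$ of order $\frac{q^4-1}{q-1}$. Then $D\cap R$ is a $\left(\frac{q^4-1}{q-1},\frac{q^3-1}{q-1},\frac{q^2-1}{q-1}\right)$ Singer difference set in $R$.
   Context: A $(v,k,\lambda)$-difference set in a finite group $G$ of order $v$ is a $k$-subset $D$ such that every non-identity element of $G$ is of the form $d_1d_2^{-1}$ with $d_1,d_2\in D$ in exactly $\lambda$ ways. For a finite field $K$ and an extension $E/K$ of finite degree, with $\pi:E^*\to E^*/K^*$ the natural map, the image $\pi(W\setminus\{0\})$ of a $K$-hyperplane $W$ of $E$ is a (Singer) difference set in the cyclic group $E^*/K^*$. $G$ is cyclic, so $R$ is its unique subgroup of that order. *)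

theory Defs
  imports Main "HOL-Algebra.Algebra" "HOL-Computational_Algebra.Primes"
begin

definition is_subfield :: "'a::field set \<Rightarrow> bool" where
  "is_subfield S \<longleftrightarrow> 0 \<in> S \<and> 1 \<in> S \<and>
     (\<forall>x\<in>S. \<forall>y\<in>S. x + y \<in> S \<and> x * y \<in> S) \<and>
     (\<forall>x\<in>S. - x \<in> S \<and> inverse x \<in> S)"

definition mult_grp :: "'a::field set \<Rightarrow> 'a monoid" where
  "mult_grp S = \<lparr>carrier = S - {0}, monoid.mult = (*), one = 1\<rparr>"

definition fin_trace :: "'a::field set \<Rightarrow> nat \<Rightarrow> 'a \<Rightarrow> 'a" where
  "fin_trace L d x = (\<Sum>i<d. x ^ (card L ^ i))"

definition is_subspace :: "'a::field set \<Rightarrow> 'a set \<Rightarrow> 'a set \<Rightarrow> bool" where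
  "is_subspace K E W \<longleftrightarrow> W \<subseteq> E \<and> 0 \<in> W \<and>
     (\<forall>x\<in>W. \<forall>y\<in>W. x + y \<in> W) \<and> (\<forall>c\<in>K. \<forall>x\<in>W. c * x \<in> W)"

text \<open>A K-hyperplane of E: a K-subspace of codimension one.\<close>
definition is_hyperplane :: "'a::field set \<Rightarrow> 'a set \<Rightarrow> 'a set \<Rightarrow> bool" where
  "is_hyperplane K E W \<longleftrightarrow> is_subspace K E W \<and> W \<noteq> E \<and>
     (\<exists>e\<in>E. E = {w + c * e | w c. w \<in> W \<and> c \<in> K})"

definition difference_set :: "('g, 'b) monoid_scheme \<Rightarrow> 'g set \<Rightarrow> nat \<Rightarrow> nat \<Rightarrow> nat \<Rightarrow> bool" where
  "difference_set H D v k lam \<longleftrightarrow> group H \<and> finite (carrier H) \<and>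
     card (carrier H) = v \<and> D \<subseteq> carrier H \<and> card D = k \<and>
     (\<forall>g\<in>carrier H. g \<noteq> \<one>\<^bsub>H\<^esub> \<longrightarrow>
        card {(d1, d2). d1 \<in> D \<and> d2 \<in> D \<and> d1 \<otimes>\<^bsub>H\<^esub> inv\<^bsub>H\<^esub> d2 = g} = lam)"

text \<open>Singer difference set in H: a difference set that is the image, under a group
  isomorphism E^*/K^* -> H, of pi(W - {0}) for a K-hyperplane W of a finite field
  extension E/K (here E, K range over subfields of the ambient field type).\<close>
definition singer_difference_set ::
  "('a::field set, 'b) monoid_scheme \<Rightarrow> 'a set set \<Rightarrow> nat \<Rightarrow> nat \<Rightarrow> nat \<Rightarrow> bool" where
  "singer_difference_set H S v k lam \<longleftrightarrow> difference_set H S v k lam \<and>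
     (\<exists>(K::'a set) (E::'a set) (W::'a set) (\<phi>::'a set \<Rightarrow> 'a set). is_subfield K \<and> is_subfield E \<and> K \<subseteq> E \<and> finite E \<and>
        is_hyperplane K E W \<and>
        \<phi> \<in> iso (mult_grp E Mod (K - {0})) H \<and>
        \<phi> ` ((\<lambda>x. (K - {0}) #>\<^bsub>mult_grp E\<^esub> x) ` (W - {0})) = S)"

end

theory Submission
  imports Defs "HOL-Number_Theory.Residues" "HOL-Computational_Algebra.Polynomial"
begin

text \<open>Let \<open>F = GF(q^(d s))\<close> contain \<open>L = GF(q^s)\<close>, \<open>E = GF(q^d)\<close> and \<open>K = GF(q)\<close>.
  Since \<open>gcd s d = 1\<close> we have \<open>E \<inter> L = K\<close>, and on \<open>E\<close> the trace of \<open>F/L\<close> agrees with the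
  trace of \<open>E/K\<close> because multiplication by \<open>s\<close> permutes the residues mod \<open>d\<close>. The subgroup
  \<open>R\<close> of \<open>F^*/L^*\<close> of order \<open>(q^d - 1)/(q - 1)\<close> is the image of \<open>E^*\<close>, and
  \<open>x K^* \<mapsto> x L^*\<close> is an isomorphism \<open>E^*/K^* \<cong> R\<close>. Hence \<open>D \<inter> R\<close> is the image of the
  trace-zero hyperplane of \<open>E\<close> over \<open>K\<close>, a Singer difference set; its parameters come from
  counting the solutions of \<open>Tr(w) = Tr(y w) = 0\<close> in \<open>E\<close>, a \<open>K\<close>-subspace of codimension 2
  when \<open>y \<notin> K\<close>. The corollary is the case \<open>d = 4\<close>.\<close>

section \<open>Counting in finite fields\<close>

lemma card_eq_mult_card_image_if_uniform_fibres:
  assumes "finite A" "\<And>y. y \<in> f ` A \<Longrightarrow> card {x\<in>A. f x = y} = c"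
  shows "card A = c * card (f ` A)"
proof -
  have "card A = card (\<Union>y\<in>f`A. {x\<in>A. f x = y})"
    by (rule arg_cong[where f = card]) auto
  also have "\<dots> = (\<Sum>y\<in>f`A. card {x\<in>A. f x = y})"
    by (rule card_UN_disjoint) (use assms(1) in auto)
  also have "\<dots> = c * card (f ` A)" using assms(2) by simp
  finally show ?thesis .
qed

lemma power_card_eq_1_if_mult_closed:
  fixes S :: "'a::field set"
  assumes "finite S" "0 \<notin> S" "\<And>a b. a \<in> S \<Longrightarrow> b \<in> S \<Longrightarrow> a * b \<in> S" "x \<in> S"
  shows "x ^ card S = 1"
proof -
  have x0: "x \<noteq> 0" using assms by auto
  have inj: "inj_on (\<lambda>y. x * y) S" using x0 by (auto simp: inj_on_def)
  have "(\<lambda>y. x * y) ` S = S"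
    using assms inj by (intro card_subset_eq) (auto simp: card_image)
  hence "(\<Prod>y\<in>S. x * y) = (\<Prod>y\<in>S. y)"
    using prod.reindex[OF inj, of id] by simp
  moreover have "(\<Prod>y\<in>S. x * y) = x ^ card S * (\<Prod>y\<in>S. y)"
    by (simp add: prod.distrib)
  moreover have "(\<Prod>y\<in>S. y) \<noteq> 0" using assms by auto
  ultimately show ?thesis by simp
qed

lemma card_power_eq_le:
  fixes c :: "'a::field"
  assumes "k > 0"
  shows "card {x. x ^ k = c} \<le> k"
proof -
  define P where "P = monom (1::'a) k - [:c:]"
  have "coeff P k = 1" using assms by (cases k) (simp_all add: P_def)
  hence P0: "P \<noteq> 0" by auto
  have "degree P \<le> k" unfolding P_def
    using degree_diff_le[of "monom (1::'a) k" k "[:c:]"] degree_monom_le[of "1::'a" k] by simp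
  moreover have "{x. x ^ k = c} = {x. poly P x = 0}" by (auto simp: P_def poly_monom)
  ultimately show ?thesis using card_poly_roots_bound[OF P0] by simp
qed

lemma power_card_minus_1_eq_1:
  fixes x :: "'a::{field,finite}"
  assumes "x \<noteq> 0"
  shows "x ^ (card (UNIV :: 'a set) - 1) = 1"
proof -
  have "x ^ card (UNIV - {0::'a}) = 1"
    by (rule power_card_eq_1_if_mult_closed) (use assms in auto)
  thus ?thesis by (simp add: card_Diff_singleton)
qed

lemma card_roots_of_unity:
  assumes "d > 0" "d dvd card (UNIV :: 'a::{field,finite} set) - 1"
  shows "card {x::'a. x ^ d = 1} = d"
proof -
  obtain m where m: "card (UNIV :: 'a set) - 1 = d * m" using assms(2) by (auto elim: dvdE)
  have "card {0::'a, 1} \<le> card (UNIV :: 'a set)" by (rule card_mono) auto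
  hence m_pos: "m > 0" using m by (cases m) auto
  define NZ where "NZ = (UNIV - {0::'a})"
  define K where "K = {x::'a. x ^ d = 1}"
  have "(\<lambda>x. x ^ d) ` NZ \<subseteq> {z. z ^ m = 1}"
    using power_card_minus_1_eq_1 by (auto simp: NZ_def simp flip: power_mult m)
  hence "card ((\<lambda>x. x ^ d) ` NZ) \<le> m"
    using card_mono[of "{z::'a. z ^ m = 1}"] card_power_eq_le[OF m_pos, of "1::'a"] by (meson finite le_trans)
  moreover have "card NZ = card K * card ((\<lambda>x. x ^ d) ` NZ)"
  proof (rule card_eq_mult_card_image_if_uniform_fibres)
    fix y assume "y \<in> (\<lambda>x. x ^ d) ` NZ"
    then obtain z where z: "z \<noteq> 0" "y = z ^ d" by (auto simp: NZ_def)
    have "{x \<in> NZ. x ^ d = y} = (\<lambda>u. z * u) ` K"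
    proof (intro equalityI subsetI)
      fix x assume "x \<in> {x \<in> NZ. x ^ d = y}"
      hence "x = z * (x / z)" "(x / z) ^ d = 1" using z by (auto simp: NZ_def power_divide)
      thus "x \<in> (\<lambda>u. z * u) ` K" unfolding K_def by blast
    qed (use z assms(1) in \<open>auto simp: NZ_def K_def power_mult_distrib power_0_left\<close>)
    moreover have "inj_on (\<lambda>u. z * u) K" using z by (auto simp: inj_on_def)
    ultimately show "card {x \<in> NZ. x ^ d = y} = card K" by (simp add: card_image)
  qed simp
  moreover have "card NZ = d * m" using m by (simp add: NZ_def card_Diff_singleton)
  ultimately have "d \<le> card K" using m_pos by (metis mult.commute mult_le_cancel2)
  moreover have "card K \<le> d" unfolding K_def by (rule card_power_eq_le[OF assms(1)])
  ultimately show ?thesis by (simp add: K_def)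
qed

lemma diff_1_dvd_power_diff_1_nat: "(a::nat) - 1 dvd a ^ k - 1"
proof (induction k)
  case (Suc k)
  show ?case
  proof (cases "a = 0")
    case False
    hence "a ^ Suc k - 1 = a * (a ^ k - 1) + (a - 1)"
      by (simp add: diff_mult_distrib2)
    thus ?thesis using Suc by simp
  qed simp
qed simp

lemma power_power_eq_self: "(x::'a::monoid_mult) ^ a = x \<Longrightarrow> x ^ (a ^ j) = x"
  by (induction j) (simp_all add: power_mult mult.commute[of a])

lemma bij_betw_mult_mod:
  fixes s d :: nat
  assumes "coprime s d"
  shows "bij_betw (\<lambda>i. s * i mod d) {..<d} {..<d}"
proof (cases "d = 0")
  case False
  have "inj_on (\<lambda>i. s * i mod d) {..<d}"
  proof (rule inj_onI)
    fix i j assume ij: "i \<in> {..<d}" "j \<in> {..<d}" "s * i mod d = s * j mod d"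
    hence "[i = j] (mod d)" using assms cong_mult_lcancel_nat by (auto simp: cong_def)
    thus "i = j" using ij by (simp add: cong_def)
  qed
  moreover have "(\<lambda>i. s * i mod d) ` {..<d} \<subseteq> {..<d}" using False by auto
  ultimately show ?thesis by (simp add: bij_betw_def endo_inj_surj)
qed (simp add: bij_betw_def)

section \<open>Subfields and their multiplicative groups\<close>

lemma is_subfield_0: "is_subfield S \<Longrightarrow> 0 \<in> S"
  and is_subfield_1: "is_subfield S \<Longrightarrow> 1 \<in> S"
  and is_subfield_add: "is_subfield S \<Longrightarrow> x \<in> S \<Longrightarrow> y \<in> S \<Longrightarrow> x + y \<in> S"
  and is_subfield_mult: "is_subfield S \<Longrightarrow> x \<in> S \<Longrightarrow> y \<in> S \<Longrightarrow> x * y \<in> S"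
  and is_subfield_uminus: "is_subfield S \<Longrightarrow> x \<in> S \<Longrightarrow> - x \<in> S"
  and is_subfield_inverse: "is_subfield S \<Longrightarrow> x \<in> S \<Longrightarrow> inverse x \<in> S"
  unfolding is_subfield_def by auto

lemma is_subfield_diff: "is_subfield S \<Longrightarrow> x \<in> S \<Longrightarrow> y \<in> S \<Longrightarrow> x - y \<in> S"
  using is_subfield_add[of S x "- y"] is_subfield_uminus[of S y] by simp

lemma is_subfield_UNIV: "is_subfield UNIV"
  by (simp add: is_subfield_def)

lemma card_eq_card_kernel_mult_card_scalars:
  fixes K A :: "'a::field set" and f :: "'a \<Rightarrow> 'a"
  assumes K: "is_subfield K" and "finite A"
    and A_add: "\<And>x y. x \<in> A \<Longrightarrow> y \<in> A \<Longrightarrow> x + y \<in> A"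
    and A_diff: "\<And>x y. x \<in> A \<Longrightarrow> y \<in> A \<Longrightarrow> x - y \<in> A"
    and A_smult: "\<And>c x. c \<in> K \<Longrightarrow> x \<in> A \<Longrightarrow> c * x \<in> A"
    and f_add: "\<And>x y. x \<in> A \<Longrightarrow> y \<in> A \<Longrightarrow> f (x + y) = f x + f y"
    and f_smult: "\<And>c x. c \<in> K \<Longrightarrow> x \<in> A \<Longrightarrow> f (c * x) = c * f x"
    and f_range: "\<And>x. x \<in> A \<Longrightarrow> f x \<in> K"
    and f_nonzero: "\<exists>a\<in>A. f a \<noteq> 0"
  shows "card A = card {x\<in>A. f x = 0} * card K"
proof -
  obtain b where b: "b \<in> A" "f b \<noteq> 0" using f_nonzero by auto
  define a where "a = inverse (f b) * b"
  have a: "a \<in> A" "f a = 1"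
    using b f_range[OF b(1)] is_subfield_inverse[OF K] by (auto simp: a_def A_smult f_smult)
  have f_diff: "f (x - y) = f x - f y" if "x \<in> A" "y \<in> A" for x y
    using f_add[OF A_diff[OF that] that(2)] by (simp add: algebra_simps)
  have ca: "c * a \<in> A" "f (c * a) = c" if "c \<in> K" for c
    using a that A_smult f_smult by auto
  have image: "f ` A = K" using ca f_range by force
  have "card A = card {x\<in>A. f x = 0} * card (f ` A)"
  proof (rule card_eq_mult_card_image_if_uniform_fibres[OF \<open>finite A\<close>])
    fix c assume "c \<in> f ` A"
    hence c: "c \<in> K" using image by simp
    have "{x \<in> A. f x = c} = (\<lambda>z. z + c * a) ` {x\<in>A. f x = 0}"
    proof (intro equalityI subsetI)
      fix x assume x: "x \<in> {x \<in> A. f x = c}"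
      hence "x - c * a \<in> {x\<in>A. f x = 0}" using ca[OF c] A_diff f_diff by auto
      moreover have "x = (x - c * a) + c * a" by simp
      ultimately show "x \<in> (\<lambda>z. z + c * a) ` {x\<in>A. f x = 0}" by blast
    qed (use ca[OF c] A_add f_add in auto)
    moreover have "inj_on (\<lambda>z. z + c * a) {x\<in>A. f x = 0}" by (auto simp: inj_on_def)
    ultimately show "card {x \<in> A. f x = c} = card {x\<in>A. f x = 0}" by (simp add: card_image)
  qed
  thus ?thesis using image by simp
qed

lemma mult_grp_simps [simp]:
  "carrier (mult_grp S) = S - {0}" "x \<otimes>\<^bsub>mult_grp S\<^esub> y = x * y" "\<one>\<^bsub>mult_grp S\<^esub> = 1"
  by (simp_all add: mult_grp_def)

lemma comm_group_mult_grp: "is_subfield (S::'a::field set) \<Longrightarrow> comm_group (mult_grp S)"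
proof (rule comm_groupI)
  fix x assume S: "is_subfield S" and x: "x \<in> carrier (mult_grp S)"
  show "\<exists>y\<in>carrier (mult_grp S). y \<otimes>\<^bsub>mult_grp S\<^esub> x = \<one>\<^bsub>mult_grp S\<^esub>"
    using S x by (intro bexI[of _ "inverse x"]) (auto simp: is_subfield_def)
qed (auto simp: is_subfield_def mult.assoc mult.commute)

lemma mult_grp_inv: "is_subfield (S::'a::field set) \<Longrightarrow> x \<in> S - {0} \<Longrightarrow>
    inv\<^bsub>mult_grp S\<^esub> x = inverse x"
  by (rule group.inv_equality[OF comm_group.axioms(2)[OF comm_group_mult_grp]])
    (auto simp: is_subfield_def)

lemma mult_grp_pow: "x [^]\<^bsub>mult_grp S\<^esub> (k::nat) = x ^ k"
  by (induction k) (simp_all add: mult.commute)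

lemma normal_mult_grp_subfield:
  assumes "is_subfield (S::'a::field set)" "is_subfield T" "T \<subseteq> S"
  shows "(T - {0}) \<lhd> mult_grp S"
proof -
  have "subgroup (T - {0}) (mult_grp S)"
    by (rule subgroup.intro) (use assms in \<open>auto simp: is_subfield_def mult_grp_inv\<close>)
  thus ?thesis by (rule comm_group.subgroup_imp_normal[OF comm_group_mult_grp[OF assms(1)]])
qed

lemma r_coset_mult_grp: "H #>\<^bsub>mult_grp S\<^esub> a = (\<lambda>h. h * a) ` H"
  by (auto simp: r_coset_def)

lemma r_coset_mult_grp_eq_iff:
  fixes x y :: "'a::field"
  assumes T: "is_subfield T" and "x \<noteq> 0" "y \<noteq> 0"
  shows "(T - {0}) #>\<^bsub>mult_grp S\<^esub> x = (T - {0}) #>\<^bsub>mult_grp S'\<^esub> y \<longleftrightarrow> x * inverse y \<in> T"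
proof
  assume eq: "(T - {0}) #>\<^bsub>mult_grp S\<^esub> x = (T - {0}) #>\<^bsub>mult_grp S'\<^esub> y"
  have "x \<in> (T - {0}) #>\<^bsub>mult_grp S\<^esub> x"
    using is_subfield_1[OF T] by (auto simp: r_coset_mult_grp image_iff intro!: bexI[of _ 1])
  then obtain h where "h \<in> T" "x = h * y" using eq by (auto simp: r_coset_mult_grp)
  thus "x * inverse y \<in> T" using \<open>y \<noteq> 0\<close> by (simp add: mult.assoc)
next
  assume "x * inverse y \<in> T"
  define t where "t = x * inverse y"
  have t: "t \<in> T - {0}" "inverse t \<in> T" "x = t * y"
    using \<open>x * inverse y \<in> T\<close> assms is_subfield_inverse[OF T, of t] by (auto simp: t_def)
  have "(T - {0}) #>\<^bsub>mult_grp S\<^esub> x = (\<lambda>h. h * t) ` (T - {0}) #>\<^bsub>mult_grp S'\<^esub> y"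
    by (auto simp: r_coset_mult_grp image_image t(3) mult.assoc)
  also have "(\<lambda>h. h * t) ` (T - {0}) = T - {0}"
  proof (intro equalityI subsetI)
    fix h assume "h \<in> T - {0}"
    hence "h = (h * inverse t) * t" "h * inverse t \<in> T - {0}"
      using t is_subfield_mult[OF T] by auto
    thus "h \<in> (\<lambda>h. h * t) ` (T - {0})" by blast
  qed (use t is_subfield_mult[OF T] in auto)
  finally show "(T - {0}) #>\<^bsub>mult_grp S\<^esub> x = (T - {0}) #>\<^bsub>mult_grp S'\<^esub> y" .
qed

lemma (in group) card_difference_pairs:
  assumes "D \<subseteq> carrier G" "g \<in> carrier G"
  shows "card {(d1, d2). d1 \<in> D \<and> d2 \<in> D \<and> d1 \<otimes> inv d2 = g} = card {d \<in> D. g \<otimes> d \<in> D}"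
proof -
  have "{(d1, d2). d1 \<in> D \<and> d2 \<in> D \<and> d1 \<otimes> inv d2 = g} = (\<lambda>d. (g \<otimes> d, d)) ` {d \<in> D. g \<otimes> d \<in> D}"
  proof (intro equalityI subsetI)
    fix pair assume "pair \<in> {(d1, d2). d1 \<in> D \<and> d2 \<in> D \<and> d1 \<otimes> inv d2 = g}"
    then obtain d1 d2 where "pair = (d1, d2)" "d1 \<in> D" "d2 \<in> D" "d1 = g \<otimes> d2"
      using assms inv_solve_right' by blast
    thus "pair \<in> (\<lambda>d. (g \<otimes> d, d)) ` {d \<in> D. g \<otimes> d \<in> D}" by auto
  qed (use assms in \<open>auto simp: inv_solve_right'\<close>)
  moreover have "inj_on (\<lambda>d. (g \<otimes> d, d)) {d \<in> D. g \<otimes> d \<in> D}" by (auto simp: inj_on_def)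
  ultimately show ?thesis by (simp add: card_image)
qed

section \<open>Frobenius fixed fields and the relative trace\<close>

locale frobenius_field =
  fixes p n q N :: nat
  assumes prime_p: "Factorial_Ring.prime p" and n_pos: "n > 0" and q_def: "q = p ^ n"
    and card_field: "card (UNIV :: 'a::{field,finite} set) = q ^ N"
begin

lemma q_ge_2: "q \<ge> 2"
proof -
  have "p \<ge> 2" using prime_p by (rule prime_ge_2_nat)
  moreover have "p \<le> p ^ n" using n_pos \<open>p \<ge> 2\<close> by (intro self_le_power) auto
  ultimately show ?thesis using q_def by simp
qed

lemma CHAR_eq: "CHAR('a) = p"
proof -
  have "Factorial_Ring.prime CHAR('a)" by (rule prime_CHAR_semidom) (simp add: finite_imp_CHAR_pos)
  moreover have "CHAR('a) dvd p ^ (n * N)"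
    using CHAR_dvd_CARD[where 'a='a] card_field q_def by (simp add: power_mult)
  ultimately show ?thesis
    using prime_p prime_dvd_power[of "CHAR('a)"] primes_dvd_imp_eq by blast
qed

lemma frobenius_add: "((x::'a) + y) ^ (q ^ k) = x ^ (q ^ k) + y ^ (q ^ k)"
  by (rule freshmans_dream'[where n = "n * k"]) (use prime_p CHAR_eq q_def in \<open>auto simp: power_mult\<close>)

lemma frobenius_sum: "(sum (f::'b \<Rightarrow> 'a) A) ^ (q ^ k) = (\<Sum>i\<in>A. f i ^ (q ^ k))"
  by (rule freshmans_dream_sum'[where n = "n * k"]) (use prime_p CHAR_eq q_def in \<open>auto simp: power_mult\<close>)

lemma frobenius_uminus: "(- (x::'a)) ^ (q ^ k) = - (x ^ (q ^ k))"
proof -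
  have "x ^ (q ^ k) + (- x) ^ (q ^ k) = 0"
    using q_ge_2 by (simp flip: frobenius_add)
  thus ?thesis by (simp add: eq_neg_iff_add_eq_0 add.commute)
qed

lemma frobenius_diff: "((x::'a) - y) ^ (q ^ k) = x ^ (q ^ k) - y ^ (q ^ k)"
  using frobenius_add[of x "- y" k] frobenius_uminus[of y k] by simp

definition fixed :: "nat \<Rightarrow> 'a set" where "fixed k = {x. x ^ (q ^ k) = x}"

lemma power_q_power_mod: "x \<in> fixed a \<Longrightarrow> x ^ (q ^ b) = x ^ (q ^ (b mod a))"
proof -
  assume "x \<in> fixed a"
  hence "x ^ (q ^ a) = x" by (simp add: fixed_def)
  hence "x ^ ((q ^ a) ^ (b div a)) = x" by (rule power_power_eq_self)
  moreover have "q ^ b = q ^ (a * (b div a) + b mod a)" by simp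
  hence "q ^ b = (q ^ a) ^ (b div a) * q ^ (b mod a)" by (simp only: power_add power_mult)
  ultimately show ?thesis by (simp add: power_mult)
qed

lemma fixed_subset_if_dvd: "a dvd b \<Longrightarrow> fixed a \<subseteq> fixed b"
proof
  fix x assume "a dvd b" "x \<in> fixed a"
  hence "x ^ (q ^ b) = x" using power_q_power_mod[of x a b] by simp
  thus "x \<in> fixed b" by (simp add: fixed_def)
qed

lemma fixed_inter_subset_gcd: "fixed a \<inter> fixed b \<subseteq> fixed (gcd a b)"
proof (cases "a = 0")
  case False
  then obtain u v where uv: "a * u = b * v + gcd a b" using bezout_nat by blast
  show ?thesis
  proof
    fix x assume x: "x \<in> fixed a \<inter> fixed b"
    have "x = x ^ (q ^ (a * u))" using x fixed_subset_if_dvd[of a "a * u"] by (auto simp: fixed_def)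
    also have "\<dots> = (x ^ (q ^ (b * v))) ^ (q ^ gcd a b)" by (simp add: uv power_add power_mult)
    also have "x ^ (q ^ (b * v)) = x" using x fixed_subset_if_dvd[of b "b * v"] by (auto simp: fixed_def)
    finally show "x \<in> fixed (gcd a b)" by (simp add: fixed_def)
  qed
qed simp

lemma is_subfield_fixed: "is_subfield (fixed k)"
  using q_ge_2 unfolding is_subfield_def fixed_def
  by (simp add: frobenius_add frobenius_uminus power_mult_distrib power_inverse power_0_left)

lemma fixed_add: "x \<in> fixed d \<Longrightarrow> y \<in> fixed d \<Longrightarrow> x + y \<in> fixed d"
  and fixed_diff: "x \<in> fixed d \<Longrightarrow> y \<in> fixed d \<Longrightarrow> x - y \<in> fixed d"
  and fixed_mult: "x \<in> fixed d \<Longrightarrow> y \<in> fixed d \<Longrightarrow> x * y \<in> fixed d"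
  and fixed_inverse: "x \<in> fixed d \<Longrightarrow> inverse x \<in> fixed d"
  using is_subfield_fixed by (simp_all add: is_subfield_add is_subfield_diff is_subfield_mult
      is_subfield_inverse)

lemma card_fixed:
  assumes "k dvd N" "k > 0"
  shows "card (fixed k) = q ^ k"
proof -
  have q_k: "1 < q ^ k" using q_ge_2 assms by (intro one_less_power) auto
  have pow: "x ^ (q ^ k) = x ^ (q ^ k - 1) * x" for x :: 'a
    by (rule power_minus_mult[symmetric]) (use q_ge_2 in simp)
  have "fixed k = insert 0 {x::'a. x ^ (q ^ k - 1) = 1}"
    using pow q_k by (auto simp: fixed_def power_0_left)
  moreover have "0 \<notin> {x::'a. x ^ (q ^ k - 1) = 1}" using q_k by (simp add: power_0_left)
  moreover have "card {x::'a. x ^ (q ^ k - 1) = 1} = q ^ k - 1"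
  proof (rule card_roots_of_unity)
    obtain j where "N = k * j" using assms by (auto elim: dvdE)
    thus "q ^ k - 1 dvd card (UNIV::'a set) - 1"
      using diff_1_dvd_power_diff_1_nat[of "q ^ k" j] by (simp add: card_field power_mult)
  qed (use q_k in simp)
  ultimately show ?thesis using q_k by simp
qed

lemma subfield_eq_fixed:
  assumes L: "is_subfield L" "card L = q ^ k" and "k dvd N" "k > 0"
  shows "L = fixed k"
proof (rule card_subset_eq)
  show "card L = card (fixed k)" using card_fixed assms by simp
  show "L \<subseteq> fixed k"
  proof
    fix l assume l: "l \<in> L"
    have "l ^ (q ^ k - 1) * l = l"
    proof (cases "l = 0")
      case False
      have "l ^ card (L - {0}) = 1"
        by (rule power_card_eq_1_if_mult_closed) (use False l L in \<open>auto simp: is_subfield_def\<close>)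
      thus ?thesis using L(2) is_subfield_0[OF L(1)] by (simp add: card_Diff_singleton)
    qed simp
    moreover have "l ^ (q ^ k) = l ^ (q ^ k - 1) * l"
      by (rule power_minus_mult[symmetric]) (use q_ge_2 in simp)
    ultimately show "l \<in> fixed k" by (simp add: fixed_def)
  qed
qed simp

definition base_field :: "'a set" where "base_field = fixed 1"

lemma is_subfield_base_field: "is_subfield base_field"
  unfolding base_field_def by (rule is_subfield_fixed)

lemma card_base_field: "card base_field = q"
  using card_fixed[of 1] by (simp add: base_field_def)

lemma base_field_subset_fixed: "base_field \<subseteq> fixed d"
  unfolding base_field_def by (rule fixed_subset_if_dvd) simp

lemma fixed_smult: "c \<in> base_field \<Longrightarrow> x \<in> fixed d \<Longrightarrow> c * x \<in> fixed d"
  using base_field_subset_fixed fixed_mult by blast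

definition tr :: "nat \<Rightarrow> 'a \<Rightarrow> 'a" where "tr d x = (\<Sum>i<d. x ^ (q ^ i))"

definition trace_zero :: "nat \<Rightarrow> 'a set" where "trace_zero d = {x \<in> fixed d. tr d x = 0}"

lemma tr_add: "tr d (x + y) = tr d x + tr d y"
  by (simp add: tr_def frobenius_add sum.distrib)

lemma tr_diff: "tr d (x - y) = tr d x - tr d y"
  by (simp add: tr_def frobenius_diff sum_subtractf)

lemma tr_0: "tr d 0 = 0"
  using tr_diff[of d 0 0] by simp

lemma power_q_power_base_field: "c \<in> base_field \<Longrightarrow> c ^ (q ^ i) = c"
  using base_field_subset_fixed[of i] by (auto simp: fixed_def)

lemma tr_smult: "c \<in> base_field \<Longrightarrow> tr d (c * x) = c * tr d x"
  by (simp add: tr_def power_mult_distrib power_q_power_base_field sum_distrib_left)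

lemma tr_in_base_field:
  assumes "x \<in> fixed d"
  shows "tr d x \<in> base_field"
proof -
  have "tr d x ^ q = (\<Sum>i<d. (x ^ (q ^ i)) ^ q)"
    unfolding tr_def using frobenius_sum[of _ _ 1] by simp
  also have "\<dots> = (\<Sum>i<d. x ^ (q ^ Suc i))"
    by (simp add: mult.commute flip: power_mult)
  also have "\<dots> = tr d x"
  proof -
    have "x ^ (q ^ 0) + (\<Sum>i<d. x ^ (q ^ Suc i)) = (\<Sum>i<d. x ^ (q ^ i)) + x ^ (q ^ d)"
      using sum.lessThan_Suc_shift[of "\<lambda>i. x ^ (q ^ i)" d] sum.lessThan_Suc[of "\<lambda>i. x ^ (q ^ i)" d]
      by simp
    thus ?thesis using assms by (simp add: fixed_def tr_def add.commute)
  qed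
  finally show ?thesis by (simp add: base_field_def fixed_def)
qed

text \<open>The trace is a polynomial of degree \<open>q ^ (d - 1)\<close>, so it cannot vanish on all of \<open>fixed d\<close>.\<close>
lemma tr_nonzero:
  assumes "d dvd N" "d > 0"
  shows "\<exists>e\<in>fixed d. tr d e \<noteq> 0"
proof (rule ccontr)
  assume "\<not> ?thesis"
  hence "fixed d \<subseteq> {x. tr d x = 0}" by auto
  hence "q ^ d \<le> card {x. tr d x = 0}" using card_fixed[OF assms] by (metis card_mono finite)
  moreover define P where "P = (\<Sum>i<d. monom (1::'a) (q ^ i))"
  have "coeff P (q ^ (d - 1)) = 1"
    using q_ge_2 assms(2) by (simp add: P_def coeff_sum coeff_monom eq_commute[of "q ^ (d - 1)"])
  hence "P \<noteq> 0" by auto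
  moreover have "degree P \<le> q ^ (d - 1)"
    unfolding P_def using q_ge_2
    by (intro degree_sum_le degree_monom_le[THEN order_trans] power_increasing) auto
  moreover have "{x. tr d x = 0} = {x. poly P x = 0}"
    by (simp add: P_def poly_sum poly_monom tr_def)
  ultimately have "q ^ d \<le> q ^ (d - 1)" by (metis card_poly_roots_bound order_trans)
  moreover have "q ^ (d - 1) < q ^ d" using q_ge_2 assms(2) by (intro power_strict_increasing) auto
  ultimately show False by simp
qed

lemma tr_eq_1:
  assumes "d dvd N" "d > 0"
  obtains e where "e \<in> fixed d" "tr d e = 1"
proof -
  obtain e where e: "e \<in> fixed d" "tr d e \<noteq> 0" using tr_nonzero[OF assms] by auto
  have c: "inverse (tr d e) \<in> base_field"
    using tr_in_base_field[OF e(1)] by (rule is_subfield_inverse[OF is_subfield_base_field])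
  show ?thesis
  proof (rule that)
    show "inverse (tr d e) * e \<in> fixed d" using c e(1) by (rule fixed_smult)
    show "tr d (inverse (tr d e) * e) = 1" using c e(2) by (simp add: tr_smult)
  qed
qed

lemma minus_tr_smult_in_trace_zero:
  assumes "e \<in> fixed d" "tr d e = 1" "x \<in> fixed d"
  shows "x - tr d x * e \<in> trace_zero d"
  using assms tr_in_base_field[OF assms(3)]
  by (simp add: trace_zero_def tr_diff tr_smult fixed_diff fixed_smult)

lemma trace_zero_subset: "trace_zero d \<subseteq> fixed d"
  and zero_in_trace_zero: "0 \<in> trace_zero d"
  and trace_zero_add: "x \<in> trace_zero d \<Longrightarrow> y \<in> trace_zero d \<Longrightarrow> x + y \<in> trace_zero d"
  and trace_zero_diff: "x \<in> trace_zero d \<Longrightarrow> y \<in> trace_zero d \<Longrightarrow> x - y \<in> trace_zero d"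
  and trace_zero_smult: "c \<in> base_field \<Longrightarrow> x \<in> trace_zero d \<Longrightarrow> c * x \<in> trace_zero d"
  using is_subfield_0[OF is_subfield_fixed]
  by (auto simp: trace_zero_def tr_add tr_diff tr_0 tr_smult fixed_add fixed_diff fixed_smult)

lemma card_trace_zero:
  assumes "d dvd N" "d > 0"
  shows "card (trace_zero d) = q ^ (d - 1)"
proof -
  have "card (fixed d) = card (trace_zero d) * card base_field"
    unfolding trace_zero_def
    by (rule card_eq_card_kernel_mult_card_scalars[OF is_subfield_base_field])
      (use tr_nonzero[OF assms] in \<open>auto simp: tr_add tr_smult tr_in_base_field fixed_add fixed_diff fixed_smult\<close>)
  moreover have "q ^ d = q ^ (d - 1) * q" by (rule power_minus_mult[symmetric]) (rule assms(2))
  ultimately show ?thesis using card_fixed[OF assms] card_base_field q_ge_2 by simp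
qed

lemma is_hyperplane_trace_zero:
  assumes "d dvd N" "d > 0"
  shows "is_hyperplane base_field (fixed d) (trace_zero d)"
proof -
  obtain e where e: "e \<in> fixed d" "tr d e = 1" using tr_eq_1[OF assms] .
  have "fixed d = {w + c * e | w c. w \<in> trace_zero d \<and> c \<in> base_field}"
  proof (intro equalityI subsetI)
    fix x assume x: "x \<in> fixed d"
    have "x = (x - tr d x * e) + tr d x * e" by simp
    thus "x \<in> {w + c * e | w c. w \<in> trace_zero d \<and> c \<in> base_field}"
      using minus_tr_smult_in_trace_zero[OF e x] tr_in_base_field[OF x] by blast
  qed (use e trace_zero_subset in \<open>auto intro: fixed_add fixed_smult\<close>)
  moreover have "e \<notin> trace_zero d" using e by (simp add: trace_zero_def)
  ultimately show ?thesis
    unfolding is_hyperplane_def is_subspace_def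
    using e(1) trace_zero_subset zero_in_trace_zero trace_zero_add trace_zero_smult by fast
qed

lemma tr_nondegenerate:
  assumes "d dvd N" "d > 0" "y \<in> fixed d" "y \<notin> base_field"
  shows "\<exists>w\<in>trace_zero d. tr d (y * w) \<noteq> 0"
proof (rule ccontr)
  assume "\<not> ?thesis"
  hence orth: "\<And>w. w \<in> trace_zero d \<Longrightarrow> tr d (y * w) = 0" by auto
  obtain e where e: "e \<in> fixed d" "tr d e = 1" using tr_eq_1[OF assms(1,2)] .
  define c where "c = tr d (y * e)"
  have c: "c \<in> base_field" unfolding c_def using assms(3) e(1) by (intro tr_in_base_field fixed_mult)
  have orth_shift: "tr d ((y - c) * x) = 0" if x: "x \<in> fixed d" for x
  proof -
    have "tr d (y * (x - tr d x * e)) = 0"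
      by (rule orth[OF minus_tr_smult_in_trace_zero[OF e x]])
    moreover have "y * (x - tr d x * e) = y * x - tr d x * (y * e)" by (simp add: algebra_simps)
    ultimately have "tr d (y * x) - tr d x * c = 0"
      using tr_in_base_field[OF x] by (simp add: tr_diff tr_smult c_def)
    moreover have "tr d ((y - c) * x) = tr d (y * x) - c * tr d x"
      using c by (simp add: left_diff_distrib tr_diff tr_smult)
    ultimately show ?thesis by (simp add: mult.commute)
  qed
  have "inverse (y - c) * e \<in> fixed d"
    using assms(3) c e base_field_subset_fixed by (intro fixed_mult fixed_inverse fixed_diff) auto
  hence "tr d ((y - c) * (inverse (y - c) * e)) = 0" by (rule orth_shift)
  moreover have "y - c \<noteq> 0" using assms(4) c by auto
  hence "(y - c) * (inverse (y - c) * e) = e" by (simp add: mult.assoc[symmetric])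
  ultimately show False using e(2) by simp
qed

lemma card_trace_zero_kernel:
  assumes "d dvd N" "d > 0" "y \<in> fixed d" "y \<notin> base_field"
  shows "card {x \<in> trace_zero d. tr d (y * x) = 0} = q ^ (d - 2)"
proof -
  have "card (trace_zero d) = card {x \<in> trace_zero d. tr d (y * x) = 0} * card base_field"
  proof (rule card_eq_card_kernel_mult_card_scalars[OF is_subfield_base_field])
    fix x assume "x \<in> trace_zero d"
    hence "y * x \<in> fixed d" using assms(3) trace_zero_subset fixed_mult by blast
    thus "tr d (y * x) \<in> base_field" by (rule tr_in_base_field)
  next
    fix c x assume "c \<in> base_field"
    thus "tr d (y * (c * x)) = c * tr d (y * x)" by (simp add: mult.left_commute[of y] tr_smult)
  qed (use tr_nondegenerate[OF assms] in \<open>simp_all add: trace_zero_add trace_zero_diff trace_zero_smult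
      distrib_left tr_add\<close>)
  moreover have "d \<noteq> 1" using assms(3,4) by (auto simp: base_field_def)
  hence "d - 1 = Suc (d - 2)" using assms(2) by arith
  hence "q ^ (d - 1) = q ^ (d - 2) * q" by (simp only: power_Suc2)
  ultimately show ?thesis using card_trace_zero[OF assms(1,2)] card_base_field q_ge_2 by simp
qed

end

section \<open>The trace-zero difference set inside a subgroup of \<open>F^*/L^*\<close>\<close>

locale singer_subgroup = frobenius_field p n q "d * s" for p n q d s :: nat +
  fixes L :: "'a::{field,finite} set" and R :: "'a set set"
  assumes coprime_s_d: "coprime s d" and d_ge_2: "d \<ge> 2" and s_pos: "s > 0"
    and is_subfield_L: "is_subfield L" and card_L: "card L = q ^ s"
    and subgroup_R: "subgroup R (mult_grp UNIV Mod (L - {0}))"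
    and card_R: "card R = (q ^ d - 1) div (q - 1)"
begin

abbreviation G :: "'a set monoid" where "G \<equiv> mult_grp UNIV Mod (L - {0})"

definition proj :: "'a \<Rightarrow> 'a set" where "proj x = (L - {0}) #>\<^bsub>mult_grp UNIV\<^esub> x"

lemma L_eq_fixed: "L = fixed s"
  using subfield_eq_fixed[OF is_subfield_L card_L] s_pos by simp

lemma base_field_subset_L: "base_field \<subseteq> L"
  unfolding L_eq_fixed by (rule base_field_subset_fixed)

lemma fixed_inter_L: "fixed d \<inter> L \<subseteq> base_field"
  using fixed_inter_subset_gcd[of d s] coprime_s_d
  by (simp add: L_eq_fixed base_field_def coprime_iff_gcd_eq_1 gcd.commute)

lemma d_pos: "d > 0"
  using d_ge_2 by simp

lemma normal_L: "(L - {0}) \<lhd> mult_grp UNIV"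
  by (rule normal_mult_grp_subfield[OF is_subfield_UNIV is_subfield_L]) simp

lemma group_G: "group G"
  by (rule normal.factorgroup_is_group[OF normal_L])

lemma carrier_G: "carrier G = proj ` (UNIV - {0})"
  by (auto simp: FactGroup_def RCOSETS_def proj_def)

lemma proj_eq_iff: "x \<noteq> 0 \<Longrightarrow> y \<noteq> 0 \<Longrightarrow> proj x = proj y \<longleftrightarrow> x * inverse y \<in> L"
  unfolding proj_def by (rule r_coset_mult_grp_eq_iff[OF is_subfield_L])

lemma proj_mult: "x \<noteq> 0 \<Longrightarrow> y \<noteq> 0 \<Longrightarrow> proj x \<otimes>\<^bsub>G\<^esub> proj y = proj (x * y)"
  using normal.rcos_sum[OF normal_L, of x y] by (simp add: proj_def FactGroup_def)

lemma proj_1: "proj 1 = L - {0}"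
  by (simp add: proj_def r_coset_mult_grp)

lemma one_G: "\<one>\<^bsub>G\<^esub> = proj 1"
  by (simp add: proj_1 FactGroup_def)

lemma proj_pow: "x \<noteq> 0 \<Longrightarrow> proj x [^]\<^bsub>G\<^esub> (k::nat) = proj (x ^ k)"
proof -
  assume "x \<noteq> 0"
  have "proj (x [^]\<^bsub>mult_grp UNIV\<^esub> k) = proj x [^]\<^bsub>G\<^esub> k"
    unfolding proj_def
    by (rule hom_nat_pow[OF normal.r_coset_hom_Mod[OF normal_L]])
      (use \<open>x \<noteq> 0\<close> group_G comm_group.axioms(2)[OF comm_group_mult_grp[OF is_subfield_UNIV]] in auto)
  thus ?thesis by (simp add: mult_grp_pow)
qed

lemma power_card_L_minus_1: "l \<in> L \<Longrightarrow> l \<noteq> 0 \<Longrightarrow> l ^ (q ^ s - 1) = 1"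
  using power_card_eq_1_if_mult_closed[of "L - {0}" l] is_subfield_L card_L
  by (auto simp: card_Diff_singleton is_subfield_def)

lemma proj_fibre_fixed:
  assumes x: "x \<in> fixed d" "x \<noteq> 0"
  shows "{x' \<in> fixed d - {0}. proj x' = proj x} = (\<lambda>k. k * x) ` (base_field - {0})"
proof (intro equalityI subsetI)
  fix x' assume x': "x' \<in> {x' \<in> fixed d - {0}. proj x' = proj x}"
  hence "x' * inverse x \<in> L" using x proj_eq_iff by auto
  moreover have "x' * inverse x \<in> fixed d" using x x' by (auto intro: fixed_mult fixed_inverse)
  ultimately have "x' * inverse x \<in> base_field - {0}" using fixed_inter_L x x' by auto
  moreover have "x' = (x' * inverse x) * x" using x by simp
  ultimately show "x' \<in> (\<lambda>k. k * x) ` (base_field - {0})" by blast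
next
  fix x' assume "x' \<in> (\<lambda>k. k * x) ` (base_field - {0})"
  then obtain k where k: "k \<in> base_field" "k \<noteq> 0" "x' = k * x" by auto
  hence "x' \<in> fixed d - {0}" using x fixed_smult by auto
  moreover have "proj x' = proj x" using k x base_field_subset_L by (subst proj_eq_iff) (auto simp: mult.assoc)
  ultimately show "x' \<in> {x' \<in> fixed d - {0}. proj x' = proj x}" by simp
qed

lemma card_proj_image:
  assumes "A \<subseteq> fixed d - {0}" "\<And>k x. k \<in> base_field - {0} \<Longrightarrow> x \<in> A \<Longrightarrow> k * x \<in> A"
  shows "card A = (q - 1) * card (proj ` A)"
proof (rule card_eq_mult_card_image_if_uniform_fibres)
  fix y assume "y \<in> proj ` A"
  then obtain x where x: "x \<in> A" "y = proj x" by auto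
  have x_fixed: "x \<in> fixed d" "x \<noteq> 0" using assms(1) x by auto
  have "{x' \<in> A. proj x' = y} = {x' \<in> fixed d - {0}. proj x' = proj x}"
    using assms x proj_fibre_fixed[OF x_fixed] by auto
  also have "\<dots> = (\<lambda>k. k * x) ` (base_field - {0})" by (rule proj_fibre_fixed[OF x_fixed])
  finally have "card {x' \<in> A. proj x' = y} = card ((\<lambda>k. k * x) ` (base_field - {0}))" by simp
  also have "\<dots> = card (base_field - {0})" using x_fixed by (intro card_image) (auto simp: inj_on_def)
  also have "\<dots> = q - 1"
    using card_base_field is_subfield_0[OF is_subfield_base_field] by (simp add: card_Diff_singleton)
  finally show "card {x' \<in> A. proj x' = y} = q - 1" .
qed simp

lemma card_proj_fixed: "card (proj ` (fixed d - {0})) = (q ^ d - 1) div (q - 1)"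
proof -
  have "q ^ d - 1 = (q - 1) * card (proj ` (fixed d - {0}))"
    using card_proj_image[of "fixed d - {0}"] card_fixed[OF dvd_triv_left d_pos]
      is_subfield_0[OF is_subfield_fixed] fixed_smult
    by (auto simp: card_Diff_singleton)
  thus ?thesis using q_ge_2 by simp
qed

lemma card_proj_roots_le:
  assumes "m > 0"
  shows "card (proj ` {x. x ^ (m * (q ^ s - 1)) = 1}) \<le> m"
proof -
  define Roots where "Roots = {x::'a. x ^ (m * (q ^ s - 1)) = 1}"
  have "1 < q ^ s" using q_ge_2 s_pos by (intro one_less_power) auto
  hence pos: "m * (q ^ s - 1) > 0" using assms by simp
  have "card Roots = (q ^ s - 1) * card (proj ` Roots)"
  proof (rule card_eq_mult_card_image_if_uniform_fibres)
    fix y assume "y \<in> proj ` Roots"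
    then obtain x where x: "x \<in> Roots" "y = proj x" by auto
    have x0: "x \<noteq> 0" using x pos by (auto simp: Roots_def power_0_left)
    have "{x' \<in> Roots. proj x' = y} = (\<lambda>l. l * x) ` (L - {0})"
    proof (intro equalityI subsetI)
      fix x' assume x': "x' \<in> {x' \<in> Roots. proj x' = y}"
      hence "x' \<noteq> 0" using pos by (auto simp: Roots_def power_0_left)
      hence "x' * inverse x \<in> L - {0}" "x' = (x' * inverse x) * x" using x x' x0 proj_eq_iff by auto
      thus "x' \<in> (\<lambda>l. l * x) ` (L - {0})" by blast
    next
      fix x' assume "x' \<in> (\<lambda>l. l * x) ` (L - {0})"
      then obtain l where l: "l \<in> L" "l \<noteq> 0" "x' = l * x" by auto
      have "l ^ (m * (q ^ s - 1)) = 1"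
        using power_card_L_minus_1[OF l(1,2)] by (simp add: power_mult mult.commute[of m])
      hence "x' \<in> Roots" using x l by (auto simp: Roots_def power_mult_distrib)
      moreover have "proj x' = proj x" using l x0 by (subst proj_eq_iff) (auto simp: mult.assoc)
      ultimately show "x' \<in> {x' \<in> Roots. proj x' = y}" using x by simp
    qed
    moreover have "inj_on (\<lambda>l. l * x) (L - {0})" using x0 by (auto simp: inj_on_def)
    ultimately show "card {x' \<in> Roots. proj x' = y} = q ^ s - 1"
      using card_L is_subfield_0[OF is_subfield_L] by (simp add: card_image card_Diff_singleton)
  qed simp
  moreover have "card Roots \<le> m * (q ^ s - 1)" unfolding Roots_def by (rule card_power_eq_le[OF pos])
  ultimately show ?thesis using pos by (simp add: Roots_def mult.commute[of m])
qed

lemma subgroup_subset_proj_roots: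
  assumes "subgroup H G"
  shows "H \<subseteq> proj ` {x. x ^ (card H * (q ^ s - 1)) = 1}"
proof
  fix g assume g: "g \<in> H"
  then obtain x where x: "x \<noteq> 0" "g = proj x" using subgroup.subset[OF assms] carrier_G by auto
  have "group (G\<lparr>carrier := H\<rparr>)" by (rule subgroup.subgroup_is_group[OF assms group_G])
  hence "g [^]\<^bsub>G\<lparr>carrier := H\<rparr>\<^esub> card H = \<one>\<^bsub>G\<lparr>carrier := H\<rparr>\<^esub>"
    using g group.pow_order_eq_1 by (fastforce simp: Coset.order_def)
  hence "g [^]\<^bsub>G\<^esub> card H = \<one>\<^bsub>G\<^esub>"
    using monoid.nat_pow_consistent[OF group.is_monoid[OF group_G], of g "card H" H] by simp
  hence "proj (x ^ card H) = proj 1" using x by (simp add: proj_pow proj_1)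
  hence "x ^ card H \<in> L" using x by (subst (asm) proj_eq_iff) auto
  hence "(x ^ card H) ^ (q ^ s - 1) = 1" using x by (intro power_card_L_minus_1) auto
  thus "g \<in> proj ` {x. x ^ (card H * (q ^ s - 1)) = 1}" using x by (auto simp: power_mult)
qed

lemma proj_fixed_subset_proj_roots:
  "proj ` (fixed d - {0}) \<subseteq> proj ` {x. x ^ ((q ^ d - 1) div (q - 1) * (q ^ s - 1)) = 1}"
proof
  fix g assume "g \<in> proj ` (fixed d - {0})"
  then obtain x where x: "x \<in> fixed d" "x \<noteq> 0" "g = proj x" by auto
  have "x ^ (q ^ d - 1) * x = x ^ (q ^ d)" using q_ge_2 by (intro power_minus_mult) simp
  hence x1: "x ^ (q ^ d - 1) = 1" using x by (simp add: fixed_def)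
  obtain j where j: "q ^ s - 1 = (q - 1) * j" using diff_1_dvd_power_diff_1_nat[of q s] by (auto elim: dvdE)
  have "(q ^ d - 1) div (q - 1) * (q - 1) = q ^ d - 1"
    by (rule dvd_div_mult_self[OF diff_1_dvd_power_diff_1_nat])
  hence "(q ^ d - 1) div (q - 1) * (q ^ s - 1) = (q ^ d - 1) * j"
    by (simp only: j mult.assoc[symmetric])
  hence "x ^ ((q ^ d - 1) div (q - 1) * (q ^ s - 1)) = 1" using x1 by (simp add: power_mult)
  thus "g \<in> proj ` {x. x ^ ((q ^ d - 1) div (q - 1) * (q ^ s - 1)) = 1}" using x by auto
qed

text \<open>Both \<open>R\<close> and the image of \<open>fixed d - {0}\<close> have \<open>m\<close> elements and lie in the image of the
  roots of \<open>x ^ (m * (q ^ s - 1)) = 1\<close>, which has at most \<open>m\<close> elements; this replaces the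
  uniqueness of subgroups of a cyclic group.\<close>
lemma R_eq: "R = proj ` (fixed d - {0})"
proof -
  define m where "m = (q ^ d - 1) div (q - 1)"
  define Y where "Y = proj ` {x. x ^ (m * (q ^ s - 1)) = 1}"
  have "proj 1 \<in> proj ` (fixed d - {0})" using is_subfield_1[OF is_subfield_fixed] by simp
  hence "m > 0" using card_proj_fixed by (auto simp: m_def card_gt_0_iff simp del: One_nat_def)
  hence "card Y \<le> m" unfolding Y_def by (rule card_proj_roots_le)
  moreover have "R \<subseteq> Y" using subgroup_subset_proj_roots[OF subgroup_R] by (simp add: Y_def m_def card_R)
  moreover have "proj ` (fixed d - {0}) \<subseteq> Y" using proj_fixed_subset_proj_roots by (simp add: Y_def m_def)
  ultimately have "R = Y" "proj ` (fixed d - {0}) = Y"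
    using card_R card_proj_fixed by (simp_all add: m_def card_seteq)
  thus ?thesis by simp
qed

lemma fin_trace_eq_tr:
  assumes "x \<in> fixed d"
  shows "fin_trace L d x = tr d x"
proof -
  have "fin_trace L d x = (\<Sum>i<d. x ^ (q ^ (s * i mod d)))"
    using power_q_power_mod[OF assms] by (simp add: fin_trace_def card_L power_mult)
  also have "\<dots> = tr d x"
    unfolding tr_def by (rule sum.reindex_bij_betw[OF bij_betw_mult_mod[OF coprime_s_d]])
  finally show ?thesis .
qed

lemma fin_trace_smult:
  assumes "l \<in> L"
  shows "fin_trace L d (l * x) = l * fin_trace L d x"
proof -
  have "l ^ ((q ^ s) ^ i) = l" for i
    using assms by (simp add: L_eq_fixed fixed_def power_power_eq_self)
  thus ?thesis by (simp add: fin_trace_def card_L power_mult_distrib sum_distrib_left)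
qed

lemma proj_trace_zero_inter_R:
  "proj ` ({x. fin_trace L d x = 0} - {0}) \<inter> R = proj ` (trace_zero d - {0})"
proof (intro equalityI subsetI)
  fix g assume g: "g \<in> proj ` ({x. fin_trace L d x = 0} - {0}) \<inter> R"
  then obtain y where y: "fin_trace L d y = 0" "y \<noteq> 0" "g = proj y" by auto
  obtain x where x: "x \<in> fixed d" "x \<noteq> 0" "g = proj x" using g R_eq by auto
  define l where "l = y * inverse x"
  have l: "l \<in> L" "l \<noteq> 0" "y = l * x" using proj_eq_iff[of y x] x y by (auto simp: l_def)
  hence "tr d x = 0" using y fin_trace_smult[OF l(1)] fin_trace_eq_tr[OF x(1)] by simp
  thus "g \<in> proj ` (trace_zero d - {0})" using x by (auto simp: trace_zero_def)
next
  fix g assume "g \<in> proj ` (trace_zero d - {0})"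
  then obtain w where w: "w \<in> trace_zero d" "w \<noteq> 0" "g = proj w" by auto
  hence "fin_trace L d w = 0" using fin_trace_eq_tr by (auto simp: trace_zero_def)
  moreover have "g \<in> R" using R_eq w trace_zero_subset by auto
  ultimately show "g \<in> proj ` ({x. fin_trace L d x = 0} - {0}) \<inter> R" using w by auto
qed

lemma proj_mem_proj_trace_zero_iff:
  assumes "z \<in> fixed d" "z \<noteq> 0"
  shows "proj z \<in> proj ` (trace_zero d - {0}) \<longleftrightarrow> z \<in> trace_zero d"
proof
  assume "proj z \<in> proj ` (trace_zero d - {0})"
  then obtain w where w: "w \<in> trace_zero d" "w \<noteq> 0" "proj z = proj w" by auto
  have "z * inverse w \<in> fixed d" using assms w trace_zero_subset by (blast intro: fixed_mult fixed_inverse)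
  moreover have "z * inverse w \<in> L" using assms w proj_eq_iff by auto
  ultimately have "z * inverse w \<in> base_field" using fixed_inter_L by auto
  moreover have "z = (z * inverse w) * w" using w by simp
  ultimately show "z \<in> trace_zero d"
    using w trace_zero_smult by metis
qed (use assms in auto)

lemma card_translate_inter_proj_trace_zero:
  assumes g: "g \<in> R" "g \<noteq> \<one>\<^bsub>G\<^esub>"
  shows "card {D \<in> proj ` (trace_zero d - {0}). g \<otimes>\<^bsub>G\<^esub> D \<in> proj ` (trace_zero d - {0})}
    = (q ^ (d - 2) - 1) div (q - 1)"
proof -
  obtain y where y: "y \<in> fixed d" "y \<noteq> 0" "g = proj y" using g(1) R_eq by auto
  have y_base: "y \<notin> base_field"
  proof
    assume "y \<in> base_field"
    hence "proj y = proj 1" using y base_field_subset_L by (subst proj_eq_iff) auto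
    thus False using g(2) y(3) one_G by metis
  qed
  define A where "A = {w \<in> trace_zero d - {0}. y * w \<in> trace_zero d}"
  have "{D \<in> proj ` (trace_zero d - {0}). g \<otimes>\<^bsub>G\<^esub> D \<in> proj ` (trace_zero d - {0})} = proj ` A"
  proof (intro equalityI subsetI)
    fix D assume D: "D \<in> {D \<in> proj ` (trace_zero d - {0}). g \<otimes>\<^bsub>G\<^esub> D \<in> proj ` (trace_zero d - {0})}"
    then obtain w where w: "w \<in> trace_zero d" "w \<noteq> 0" "D = proj w" by auto
    have yw: "y * w \<in> fixed d" "y * w \<noteq> 0" using y w trace_zero_subset by (auto intro: fixed_mult)
    have "g \<otimes>\<^bsub>G\<^esub> D = proj (y * w)" using w y proj_mult by simp
    hence "y * w \<in> trace_zero d" using D proj_mem_proj_trace_zero_iff[OF yw] by simp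
    thus "D \<in> proj ` A" using w by (auto simp: A_def)
  next
    fix D assume "D \<in> proj ` A"
    then obtain w where w: "w \<in> trace_zero d" "w \<noteq> 0" "y * w \<in> trace_zero d" "D = proj w"
      by (auto simp: A_def)
    have "g \<otimes>\<^bsub>G\<^esub> D = proj (y * w)" using w y proj_mult by simp
    thus "D \<in> {D \<in> proj ` (trace_zero d - {0}). g \<otimes>\<^bsub>G\<^esub> D \<in> proj ` (trace_zero d - {0})}"
      using w y by auto
  qed
  moreover have "card A = (q - 1) * card (proj ` A)"
    using trace_zero_subset by (intro card_proj_image) (auto simp: A_def trace_zero_smult mult.left_commute[of y])
  moreover have "A = {x \<in> trace_zero d. tr d (y * x) = 0} - {0}"
    using y trace_zero_subset by (auto simp: A_def trace_zero_def intro: fixed_mult)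
  hence "card A = q ^ (d - 2) - 1"
    using card_trace_zero_kernel[OF dvd_triv_left d_pos y(1) y_base] zero_in_trace_zero tr_0
    by (simp add: card_Diff_singleton)
  ultimately show ?thesis using q_ge_2 by simp
qed

definition lift :: "'a set \<Rightarrow> 'a set" where "lift C = {l * c | l c. l \<in> L - {0} \<and> c \<in> C}"

lemma normal_base_field: "(base_field - {0}) \<lhd> mult_grp (fixed d)"
  by (rule normal_mult_grp_subfield[OF is_subfield_fixed is_subfield_base_field base_field_subset_fixed])

lemma carrier_mult_grp_fixed_Mod:
  "carrier (mult_grp (fixed d) Mod (base_field - {0}))
    = (\<lambda>x. (base_field - {0}) #>\<^bsub>mult_grp (fixed d)\<^esub> x) ` (fixed d - {0})"
  by (auto simp: FactGroup_def RCOSETS_def)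

lemma lift_r_coset: "lift ((base_field - {0}) #>\<^bsub>mult_grp (fixed d)\<^esub> x) = proj x"
proof (intro equalityI subsetI)
  fix z assume "z \<in> lift ((base_field - {0}) #>\<^bsub>mult_grp (fixed d)\<^esub> x)"
  then obtain l k where "z = (l * k) * x" "l \<in> L - {0}" "k \<in> base_field - {0}"
    by (auto simp: lift_def r_coset_mult_grp mult.assoc)
  moreover hence "l * k \<in> L - {0}" using base_field_subset_L is_subfield_mult[OF is_subfield_L] by auto
  ultimately show "z \<in> proj x" by (auto simp: proj_def r_coset_mult_grp)
next
  fix z assume "z \<in> proj x"
  then obtain l where "z = l * x" "l \<in> L - {0}" by (auto simp: proj_def r_coset_mult_grp)
  moreover have "x \<in> (base_field - {0}) #>\<^bsub>mult_grp (fixed d)\<^esub> x"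
    using is_subfield_1[OF is_subfield_base_field] unfolding r_coset_mult_grp by force
  ultimately show "z \<in> lift ((base_field - {0}) #>\<^bsub>mult_grp (fixed d)\<^esub> x)" unfolding lift_def by blast
qed

text \<open>\<open>lift\<close> sends \<open>x K^*\<close> to \<open>x L^*\<close>; it is injective because \<open>E \<inter> L = K\<close>.\<close>
lemma lift_iso: "lift \<in> iso (mult_grp (fixed d) Mod (base_field - {0})) (G\<lparr>carrier := R\<rparr>)"
proof -
  let ?coset = "\<lambda>x. (base_field - {0}) #>\<^bsub>mult_grp (fixed d)\<^esub> x"
  have "lift \<in> hom (mult_grp (fixed d) Mod (base_field - {0})) (G\<lparr>carrier := R\<rparr>)"
  proof (rule homI)
    fix C assume "C \<in> carrier (mult_grp (fixed d) Mod (base_field - {0}))"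
    then obtain x where "x \<in> fixed d - {0}" "C = ?coset x" using carrier_mult_grp_fixed_Mod by auto
    thus "lift C \<in> carrier (G\<lparr>carrier := R\<rparr>)" using R_eq lift_r_coset by auto
  next
    fix C D assume "C \<in> carrier (mult_grp (fixed d) Mod (base_field - {0}))"
      "D \<in> carrier (mult_grp (fixed d) Mod (base_field - {0}))"
    then obtain x y where "x \<in> fixed d - {0}" "C = ?coset x" "y \<in> fixed d - {0}" "D = ?coset y"
      using carrier_mult_grp_fixed_Mod by auto
    thus "lift (C \<otimes>\<^bsub>mult_grp (fixed d) Mod (base_field - {0})\<^esub> D) = lift C \<otimes>\<^bsub>G\<lparr>carrier := R\<rparr>\<^esub> lift D"
      using normal.rcos_sum[OF normal_base_field, of x y] proj_mult lift_r_coset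
      by (simp add: FactGroup_def)
  qed
  moreover have "inj_on lift (carrier (mult_grp (fixed d) Mod (base_field - {0})))"
  proof (rule inj_onI)
    fix C D assume CD: "C \<in> carrier (mult_grp (fixed d) Mod (base_field - {0}))"
      "D \<in> carrier (mult_grp (fixed d) Mod (base_field - {0}))" "lift C = lift D"
    then obtain x y where xy: "x \<in> fixed d - {0}" "C = ?coset x" "y \<in> fixed d - {0}" "D = ?coset y"
      using carrier_mult_grp_fixed_Mod by auto
    hence "proj x = proj y" using CD(3) lift_r_coset by simp
    hence "x * inverse y \<in> L" using xy proj_eq_iff by auto
    moreover have "x * inverse y \<in> fixed d" using xy by (auto intro: fixed_mult fixed_inverse)
    ultimately have "x * inverse y \<in> base_field" using fixed_inter_L by auto
    thus "C = D" using xy r_coset_mult_grp_eq_iff[OF is_subfield_base_field, of x y] by auto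
  qed
  moreover have "lift ` carrier (mult_grp (fixed d) Mod (base_field - {0})) = R"
    using carrier_mult_grp_fixed_Mod R_eq by (auto simp: image_image lift_r_coset)
  ultimately show ?thesis by (simp add: iso_def bij_betw_def)
qed

lemma card_proj_trace_zero: "card (proj ` (trace_zero d - {0})) = (q ^ (d - 1) - 1) div (q - 1)"
proof -
  have "card (trace_zero d - {0}) = (q - 1) * card (proj ` (trace_zero d - {0}))"
    using trace_zero_subset by (intro card_proj_image) (auto simp: trace_zero_smult)
  hence "q ^ (d - 1) - 1 = (q - 1) * card (proj ` (trace_zero d - {0}))"
    using card_trace_zero[OF dvd_triv_left d_pos] zero_in_trace_zero by (simp add: card_Diff_singleton)
  thus ?thesis using q_ge_2 by simp
qed

lemma difference_set_proj_trace_zero: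
  "difference_set (G\<lparr>carrier := R\<rparr>) (proj ` (trace_zero d - {0}))
     ((q ^ d - 1) div (q - 1)) ((q ^ (d - 1) - 1) div (q - 1)) ((q ^ (d - 2) - 1) div (q - 1))"
  unfolding difference_set_def
proof (intro conjI ballI impI)
  show group_R: "group (G\<lparr>carrier := R\<rparr>)" by (rule subgroup.subgroup_is_group[OF subgroup_R group_G])
  have D_subset: "proj ` (trace_zero d - {0}) \<subseteq> R" using R_eq trace_zero_subset by auto
  thus "proj ` (trace_zero d - {0}) \<subseteq> carrier (G\<lparr>carrier := R\<rparr>)" by simp
  fix g assume "g \<in> carrier (G\<lparr>carrier := R\<rparr>)" "g \<noteq> \<one>\<^bsub>G\<lparr>carrier := R\<rparr>\<^esub>"
  thus "card {(d1, d2). d1 \<in> proj ` (trace_zero d - {0}) \<and> d2 \<in> proj ` (trace_zero d - {0}) \<and>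
      d1 \<otimes>\<^bsub>G\<lparr>carrier := R\<rparr>\<^esub> inv\<^bsub>G\<lparr>carrier := R\<rparr>\<^esub> d2 = g} = (q ^ (d - 2) - 1) div (q - 1)"
    using group.card_difference_pairs[OF group_R, of "proj ` (trace_zero d - {0})" g] D_subset
      card_translate_inter_proj_trace_zero[of g] by simp
qed (simp_all add: card_R card_proj_trace_zero)

theorem singer_difference_set_inter_subgroup:
  "singer_difference_set (G\<lparr>carrier := R\<rparr>) (proj ` ({x. fin_trace L d x = 0} - {0}) \<inter> R)
     ((q ^ d - 1) div (q - 1)) ((q ^ (d - 1) - 1) div (q - 1)) ((q ^ (d - 2) - 1) div (q - 1))"
proof -
  have "is_subfield base_field \<and> is_subfield (fixed d) \<and> base_field \<subseteq> fixed d \<and> finite (fixed d) \<and>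
      is_hyperplane base_field (fixed d) (trace_zero d) \<and>
      lift \<in> iso (mult_grp (fixed d) Mod (base_field - {0})) (G\<lparr>carrier := R\<rparr>) \<and>
      lift ` (\<lambda>x. (base_field - {0}) #>\<^bsub>mult_grp (fixed d)\<^esub> x) ` (trace_zero d - {0})
        = proj ` (trace_zero d - {0})"
    using is_subfield_base_field is_subfield_fixed base_field_subset_fixed
      is_hyperplane_trace_zero[OF dvd_triv_left d_pos] lift_iso by (simp add: image_image lift_r_coset)
  thus ?thesis
    using difference_set_proj_trace_zero
    unfolding singer_difference_set_def proj_trace_zero_inter_R by auto
qed

end

theorem corollary3p2:
  fixes q s :: nat and L :: "'a::{field,finite} set" and R :: "'a set set"
  assumes "\<exists>p n. Factorial_Ring.prime (p::nat) \<and> n > 0 \<and> q = p ^ n"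
    and "odd s" and "s > 0"
    and "is_subfield L" and "card L = q ^ s"
    and "card (UNIV :: 'a set) = q ^ (4 * s)"
    and "subgroup R (mult_grp (UNIV :: 'a set) Mod (L - {0}))"
    and "card R = (q ^ 4 - 1) div (q - 1)"
  shows "singer_difference_set
           ((mult_grp (UNIV :: 'a set) Mod (L - {0})) \<lparr>carrier := R\<rparr>)
           ((\<lambda>x. (L - {0}) #>\<^bsub>mult_grp (UNIV :: 'a set)\<^esub> x)
               ` ({x. fin_trace L 4 x = 0} - {0}) \<inter> R)
           ((q ^ 4 - 1) div (q - 1)) ((q ^ 3 - 1) div (q - 1)) ((q ^ 2 - 1) div (q - 1))"
proof -
  obtain p n where "Factorial_Ring.prime p" "n > 0" "q = p ^ n" using assms(1) by blast
  moreover have "coprime s 4"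
    using \<open>odd s\<close> coprime_power_right_iff[of s 2 2] by simp
  ultimately interpret singer_subgroup p n q 4 s L R
    using assms(3-8)
    by (intro singer_subgroup.intro frobenius_field.intro singer_subgroup_axioms.intro) simp_all
  show ?thesis
    using singer_difference_set_inter_subgroup by (simp add: proj_def[abs_def])
qed

end
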